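(* Let $\Omega$ be a pointed solid closed convex cone in a finite-dimensional real inner product space $X$ such that $\Omega^*$ is locally smooth. Then for each $1\le j\le d$ the map $\mathcal P_j\to P_{j-1}\times X$, $(E,F)\mapsto(E,e_F(E))$, is a well-defined injection, where $e_F(E)$ is the normalised generator of the extreme ray $F^\perp\cap E^\circledast$ of $E^\circledast$.
   Context: $A^*=\{y:\langle y,a\rangle\ge0\ \forall a\in A\}$, $A^\circledast=A^*\cap\operatorname{span}A$. Faces of a convex set $C$: subsets $F$ such that every segment in $C$ with midpoint in $F$ lies in $F$. Let $0=n_0<\dots<n_d=\dim X$ be the dimensions of the faces of $\Omega^*$, $P_j$ the set of faces of $\Omega^*$ of dimension $n_{d-j}$, and $\mathcal P_j=\{(E,F)\in P_{j-1}\times P_j:E\supset F\}$. A face $E$ of a cone $C$ is modular if it contains a face of dimension $\max\{\dim G:G\text{ face of }C,\dim G<\dim E\}$; such $E$ is smooth if the relative interior of every face $F\subsetneq E$ of that dimension consists of regular points of $E$ (points with a unique supporting hyperplane); $C$ is locally smooth if all its modular faces are smooth. *)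

theory Defs
  imports "HOL-Analysis.Analysis"
begin

definition dual_cone :: "'a::real_inner set \<Rightarrow> 'a set" where
  "dual_cone A = {y. \<forall>a\<in>A. inner y a \<ge> 0}"

definition dual_cone_span :: "'a::real_inner set \<Rightarrow> 'a set" where
  "dual_cone_span A = dual_cone A \<inter> span A"

definition orth_comp :: "'a::real_inner set \<Rightarrow> 'a set" where
  "orth_comp F = {y. \<forall>x\<in>F. inner x y = 0}"

definition pointed_cone :: "'a::real_vector set \<Rightarrow> bool" where
  "pointed_cone C \<longleftrightarrow> C \<inter> uminus ` C \<subseteq> {0}"

text \<open>Faces are the (convex) faces in the sense of face_of; the empty face is excluded.
  The dimension of a face of a cone is the dimension of its linear span.\<close>

definition face_dims :: "'a::euclidean_space set \<Rightarrow> nat set" where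
  "face_dims C = {dim G | G. G face_of C \<and> G \<noteq> {}}"

definition dims_list :: "'a::euclidean_space set \<Rightarrow> nat list" where
  "dims_list C = sorted_list_of_set (face_dims C)"

definition face_dim_n :: "'a::euclidean_space set \<Rightarrow> nat \<Rightarrow> nat" where
  "face_dim_n C j = dims_list C ! j"

definition face_d :: "'a::euclidean_space set \<Rightarrow> nat" where
  "face_d C = length (dims_list C) - 1"

definition face_level :: "'a::euclidean_space set \<Rightarrow> nat \<Rightarrow> 'a set set" where
  "face_level C j = {F. F face_of C \<and> F \<noteq> {} \<and> dim F = face_dim_n C (face_d C - j)}"

definition face_pairs :: "'a::euclidean_space set \<Rightarrow> nat \<Rightarrow> ('a set \<times> 'a set) set" where
  "face_pairs C j = {(E, F). E \<in> face_level C (j - 1) \<and> F \<in> face_level C j \<and> F \<subseteq> E}"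

definition lower_dim :: "'a::euclidean_space set \<Rightarrow> 'a set \<Rightarrow> nat" where
  "lower_dim C E = Max {dim G | G. G face_of C \<and> G \<noteq> {} \<and> dim G < dim E}"

definition modular_face :: "'a::euclidean_space set \<Rightarrow> 'a set \<Rightarrow> bool" where
  "modular_face C E \<longleftrightarrow> E face_of C \<and> E \<noteq> {} \<and>
     (\<exists>G. G face_of C \<and> G \<noteq> {} \<and> dim G < dim E) \<and>
     (\<exists>G. G face_of C \<and> G \<noteq> {} \<and> G \<subseteq> E \<and> dim G = lower_dim C E)"

text \<open>Supporting hyperplane of E at x, taken inside the linear span of E
  (the ambient space of E).\<close>
definition supp_hyperplane :: "'a::euclidean_space set \<Rightarrow> 'a \<Rightarrow> 'a set \<Rightarrow> bool" where
  "supp_hyperplane E x H \<longleftrightarrow>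
     (\<exists>u c. u \<in> span E \<and> u \<noteq> 0 \<and> H = {y \<in> span E. inner u y = c} \<and>
            x \<in> H \<and> (\<forall>y\<in>E. inner u y \<ge> c))"

definition regular_point :: "'a::euclidean_space set \<Rightarrow> 'a \<Rightarrow> bool" where
  "regular_point E x \<longleftrightarrow> x \<in> E \<and> (\<exists>!H. supp_hyperplane E x H)"

definition smooth_face :: "'a::euclidean_space set \<Rightarrow> 'a set \<Rightarrow> bool" where
  "smooth_face C E \<longleftrightarrow>
     (\<forall>F. F face_of E \<and> F \<noteq> {} \<and> F \<noteq> E \<and> dim F = lower_dim C E \<longrightarrow>
          (\<forall>x\<in>rel_interior F. regular_point E x))"

definition locally_smooth :: "'a::euclidean_space set \<Rightarrow> bool" where
  "locally_smooth C \<longleftrightarrow> (\<forall>E. modular_face C E \<longrightarrow> smooth_face C E)"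

definition ray_gen :: "'a::real_normed_vector \<Rightarrow> 'a set" where
  "ray_gen e = {t *\<^sub>R e | t. t \<ge> 0}"

definition norm_gen :: "'a::euclidean_space set \<Rightarrow> 'a set \<Rightarrow> 'a" where
  "norm_gen F E = (THE e. norm e = 1 \<and> orth_comp F \<inter> dual_cone_span E = ray_gen e)"

end

theory Submission
  imports Defs
begin

text \<open>
  Let (E, F) be a pair in \<open>\<P>\<^sub>j\<close> and x a point of the relative interior of F. A functional
  of \<open>E\<^sup>\<circledast>\<close> that vanishes at x vanishes on all of F, so \<open>F\<^sup>\<bottom> \<inter> E\<^sup>\<circledast>\<close> is the face of
  \<open>E\<^sup>\<circledast>\<close> exposed by x. Since dim F is the largest face dimension below dim E, E is a
  modular face, so by local smoothness x is a regular point of E. As E is a cone, every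
  supporting hyperplane at x passes through 0; hence all nonzero elements of that face cut
  out the same hyperplane of span E, which makes the face a single ray. Its unit generator e
  recovers F: \<open>E \<inter> e\<^sup>\<bottom>\<close> is a face of \<open>\<Omega>\<^sup>*\<close> containing F whose dimension is below dim E,
  hence at most dim F, so it equals F.
\<close>

lemma convex_dual_cone: "convex (dual_cone A)"
  unfolding convex_def dual_cone_def
  by (auto simp: inner_add_left intro!: add_nonneg_nonneg mult_nonneg_nonneg)

lemma conic_dual_cone: "conic (dual_cone A)"
  unfolding conic_def dual_cone_def by auto

lemma convex_dual_cone_span: "convex (dual_cone_span A)"
  unfolding dual_cone_span_def
  by (intro convex_Int convex_dual_cone subspace_imp_convex subspace_span)

lemma inner_eq_0_if_min_at_rel_interior:
  fixes F :: "'a::euclidean_space set"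
  assumes "convex F" "x \<in> rel_interior F" "\<forall>y\<in>F. 0 \<le> v \<bullet> y" "v \<bullet> x = 0" "y \<in> F"
  shows "v \<bullet> y = 0"
proof -
  have "F \<inter> {y. v \<bullet> y = 0} face_of F"
    using assms(1,3) by (intro face_of_Int_supporting_hyperplane_ge) auto
  moreover have "x \<in> F \<inter> {y. v \<bullet> y = 0} \<inter> rel_interior F"
    using assms(2,4) rel_interior_subset by blast
  ultimately have "F \<inter> {y. v \<bullet> y = 0} = F"
    using face_of_disjoint_rel_interior by blast
  then show ?thesis using assms(5) by blast
qed

lemma orth_comp_Int_dual_cone_span_eq:
  fixes E :: "'a::euclidean_space set"
  assumes "F \<subseteq> E" "convex F" "x \<in> rel_interior F"
  shows "orth_comp F \<inter> dual_cone_span E = dual_cone_span E \<inter> {v. x \<bullet> v = 0}"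
proof -
  have "v \<bullet> y = 0"
    if "v \<in> dual_cone_span E" "x \<bullet> v = 0" "y \<in> F" for v y
    using inner_eq_0_if_min_at_rel_interior[OF assms(2,3), of v y] that assms(1)
    by (auto simp: dual_cone_span_def dual_cone_def inner_commute)
  moreover have "x \<in> F" using assms(3) rel_interior_subset by blast
  ultimately show ?thesis unfolding orth_comp_def by (auto simp: inner_commute)
qed

lemma face_of_dual_cone_span_orth_comp:
  fixes E :: "'a::euclidean_space set"
  assumes "F \<subseteq> E" "convex F" "F \<noteq> {}"
  shows "(orth_comp F \<inter> dual_cone_span E) face_of dual_cone_span E"
proof -
  obtain x where x: "x \<in> rel_interior F"
    using assms(2,3) rel_interior_eq_empty by blast
  have "x \<bullet> v \<ge> 0" if "v \<in> dual_cone_span E" for v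
    using that x assms(1) rel_interior_subset
    by (force simp: dual_cone_span_def dual_cone_def inner_commute)
  then have "(dual_cone_span E \<inter> {v. x \<bullet> v = 0}) face_of dual_cone_span E"
    by (intro face_of_Int_supporting_hyperplane_ge convex_dual_cone_span)
  then show ?thesis
    using orth_comp_Int_dual_cone_span_eq[OF assms(1,2) x] by simp
qed

lemma supp_hyperplane_conicE:
  fixes E :: "'a::euclidean_space set"
  assumes "conic E" "x \<in> E" "supp_hyperplane E x H"
  obtains u where "u \<in> span E" "u \<noteq> 0" "H = {y \<in> span E. u \<bullet> y = 0}"
    "u \<bullet> x = 0" "\<forall>y\<in>E. 0 \<le> u \<bullet> y"
proof -
  obtain u c where u: "u \<in> span E" "u \<noteq> 0" "H = {y \<in> span E. u \<bullet> y = c}"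
    "u \<bullet> x = c" "\<forall>y\<in>E. c \<le> u \<bullet> y"
    using assms(3) unfolding supp_hyperplane_def by auto
  \<comment> \<open>Testing the hyperplane at the points 0 and 2x of the cone forces c = 0.\<close>
  have "0 \<in> E" "2 *\<^sub>R x \<in> E" using conicD[OF assms(1,2), of 0] conicD[OF assms(1,2), of 2] by auto
  then have "c \<le> 0" "c \<le> 2 * c" using u(4,5) by (metis inner_zero_right, metis inner_scaleR_right)
  then have "c = 0" by simp
  with u show ?thesis by (intro that[of u]) simp_all
qed

lemma eq_projection_if_kernel_subset:
  fixes u v :: "'a::real_inner"
  assumes "subspace V" "u \<in> V" "v \<in> V" "u \<noteq> 0"
    and "\<forall>y\<in>V. u \<bullet> y = 0 \<longrightarrow> v \<bullet> y = 0"
  shows "v = ((v \<bullet> u) / (u \<bullet> u)) *\<^sub>R u"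
proof -
  define w where "w = v - ((v \<bullet> u) / (u \<bullet> u)) *\<^sub>R u"
  have "w \<in> V" unfolding w_def using assms(1-3) by (simp add: subspace_diff subspace_scale)
  moreover have "u \<bullet> w = 0"
    unfolding w_def using assms(4) by (simp add: inner_diff_right inner_commute)
  ultimately have "v \<bullet> w = 0" using assms(5) by blast
  with \<open>u \<bullet> w = 0\<close> have "w \<bullet> w = 0"
    unfolding w_def by (simp add: inner_diff_left inner_commute)
  then show ?thesis unfolding w_def by simp
qed

lemma eq_0_if_orthogonal_in_span:
  fixes u :: "'a::euclidean_space"
  assumes "u \<in> span E" "\<forall>y\<in>E. u \<bullet> y = 0"
  shows "u = 0"
  using orthogonal_to_span[OF assms(1), of u] assms(2)
  by (simp add: orthogonal_def)

lemma mem_ray_gen_if_same_kernel: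
  fixes E :: "'a::euclidean_space set"
  assumes "u \<in> dual_cone_span E" "u \<noteq> 0" "v \<in> dual_cone_span E"
    and "{y \<in> span E. v \<bullet> y = 0} = {y \<in> span E. u \<bullet> y = 0}"
  shows "v \<in> ray_gen u"
proof -
  define s where "s = (v \<bullet> u) / (u \<bullet> u)"
  have u: "u \<in> span E" "\<forall>y\<in>E. 0 \<le> u \<bullet> y" and v: "v \<in> span E" "\<forall>y\<in>E. 0 \<le> v \<bullet> y"
    using assms(1,3) by (auto simp: dual_cone_span_def dual_cone_def)
  have vs: "v = s *\<^sub>R u"
    unfolding s_def using assms(2,4) u(1) v(1) by (intro eq_projection_if_kernel_subset) auto
  have "s \<ge> 0"
  proof (rule ccontr)
    assume "\<not> s \<ge> 0"
    have "u \<bullet> y = 0" if "y \<in> E" for y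
    proof -
      have "0 \<le> s * (u \<bullet> y)" using v(2) that vs by simp
      with \<open>\<not> s \<ge> 0\<close> have "u \<bullet> y \<le> 0" by (simp add: zero_le_mult_iff)
      with u(2) that show ?thesis by force
    qed
    then show False using eq_0_if_orthogonal_in_span u(1) assms(2) by blast
  qed
  with vs show ?thesis unfolding ray_gen_def by blast
qed

lemma orth_comp_Int_dual_cone_span_eq_ray_gen:
  fixes E :: "'a::euclidean_space set"
  assumes "conic E" "F face_of E" "x \<in> rel_interior F" "regular_point E x"
  obtains u where "u \<noteq> 0" "orth_comp F \<inter> dual_cone_span E = ray_gen u"
proof -
  have xE: "x \<in> E" using assms(2,3) rel_interior_subset face_of_imp_subset by blast
  obtain H where H: "supp_hyperplane E x H" and H_unique: "\<And>H'. supp_hyperplane E x H' \<Longrightarrow> H' = H"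
    using assms(4) unfolding regular_point_def by blast
  obtain u where u: "u \<in> span E" "u \<noteq> 0" "H = {y \<in> span E. u \<bullet> y = 0}"
    "u \<bullet> x = 0" "\<forall>y\<in>E. 0 \<le> u \<bullet> y"
    using supp_hyperplane_conicE[OF assms(1) xE H] by blast
  have N_eq: "orth_comp F \<inter> dual_cone_span E = dual_cone_span E \<inter> {v. x \<bullet> v = 0}"
    using assms(2,3) face_of_imp_subset face_of_imp_convex
    by (intro orth_comp_Int_dual_cone_span_eq) auto
  have uD: "u \<in> dual_cone_span E"
    using u by (simp add: dual_cone_span_def dual_cone_def)
  have "orth_comp F \<inter> dual_cone_span E = ray_gen u"
  proof
    show "ray_gen u \<subseteq> orth_comp F \<inter> dual_cone_span E"
      using uD u(4) unfolding N_eq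
      by (auto simp: ray_gen_def dual_cone_span_def dual_cone_def inner_commute span_mul)
    show "orth_comp F \<inter> dual_cone_span E \<subseteq> ray_gen u"
    proof
      fix v assume "v \<in> orth_comp F \<inter> dual_cone_span E"
      then have v: "v \<in> dual_cone_span E" "v \<bullet> x = 0"
        unfolding N_eq by (auto simp: inner_commute)
      show "v \<in> ray_gen u"
      proof (cases "v = 0")
        case True
        then show ?thesis unfolding ray_gen_def by (auto intro: exI[of _ 0])
      next
        case False
        \<comment> \<open>Every nonzero v also defines a supporting hyperplane at x, which must be H.\<close>
        have "supp_hyperplane E x {y \<in> span E. v \<bullet> y = 0}"
          unfolding supp_hyperplane_def using v False xE
          by (intro exI[of _ v] exI[of _ 0]) (auto simp: dual_cone_span_def dual_cone_def span_base)
        then show ?thesis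
          using H_unique u(3) mem_ray_gen_if_same_kernel[OF uD u(2) v(1)] by blast
      qed
    qed
  qed
  with u(2) that show ?thesis by blast
qed

lemma mem_ray_gen_self: "u \<in> ray_gen u"
  unfolding ray_gen_def by (auto intro: exI[of _ 1])

lemma ray_gen_scaleR:
  fixes u :: "'a::real_normed_vector"
  assumes "c > 0"
  shows "ray_gen (c *\<^sub>R u) = ray_gen u"
proof (intro set_eqI iffI)
  fix w assume "w \<in> ray_gen (c *\<^sub>R u)"
  then obtain t where "t \<ge> 0" "w = (t * c) *\<^sub>R u" unfolding ray_gen_def by auto
  with assms show "w \<in> ray_gen u" unfolding ray_gen_def by auto
next
  fix w assume "w \<in> ray_gen u"
  then obtain t where "t \<ge> 0" "w = t *\<^sub>R u" unfolding ray_gen_def by auto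
  with assms show "w \<in> ray_gen (c *\<^sub>R u)" unfolding ray_gen_def by (auto intro!: exI[of _ "t / c"])
qed

lemma unit_eq_if_ray_gen_eq:
  fixes e e' :: "'a::real_normed_vector"
  assumes "norm e = 1" "norm e' = 1" "ray_gen e' = ray_gen e"
  shows "e' = e"
proof -
  obtain t where "t \<ge> 0" "e' = t *\<^sub>R e"
    using mem_ray_gen_self[of e'] assms(3) unfolding ray_gen_def by auto
  with assms(1,2) show ?thesis by simp
qed

lemma ex1_unit_ray_gen:
  fixes u :: "'a::real_normed_vector"
  assumes "u \<noteq> 0"
  shows "\<exists>!e. norm e = 1 \<and> ray_gen u = ray_gen e"
proof -
  have ray_unit: "ray_gen (u /\<^sub>R norm u) = ray_gen u"
    using assms by (intro ray_gen_scaleR) simp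
  show ?thesis
  proof (rule ex1I)
    show "norm (u /\<^sub>R norm u) = 1 \<and> ray_gen u = ray_gen (u /\<^sub>R norm u)"
      using assms ray_unit by simp
    show "e = u /\<^sub>R norm u" if e: "norm e = 1 \<and> ray_gen u = ray_gen e" for e
    proof (rule unit_eq_if_ray_gen_eq)
      show "norm (u /\<^sub>R norm u) = 1" using assms by simp
      show "norm e = 1" "ray_gen e = ray_gen (u /\<^sub>R norm u)" using e ray_unit by simp_all
    qed
  qed
qed

lemma norm_gen_ray_gen:
  assumes "u \<noteq> 0" "orth_comp F \<inter> dual_cone_span E = ray_gen u"
  shows "norm (norm_gen F E) = 1" "orth_comp F \<inter> dual_cone_span E = ray_gen (norm_gen F E)"
  using theI'[OF ex1_unit_ray_gen[OF assms(1)]] assms(2) unfolding norm_gen_def by auto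

lemma dim_Int_kernel_less:
  fixes S :: "'a::euclidean_space set"
  assumes "e \<in> span S" "e \<noteq> 0"
  shows "dim (S \<inter> {y. e \<bullet> y = 0}) < dim S"
proof -
  have "span (S \<inter> {y. e \<bullet> y = 0}) \<noteq> span S"
  proof
    assume "span (S \<inter> {y. e \<bullet> y = 0}) = span S"
    then have "e \<in> span (S \<inter> {y. e \<bullet> y = 0})" using assms(1) by simp
    then have "e = 0" by (rule eq_0_if_orthogonal_in_span) auto
    with assms(2) show False ..
  qed
  then show ?thesis
    using dim_subset[of "S \<inter> {y. e \<bullet> y = 0}" S] dim_eq_span[of "S \<inter> {y. e \<bullet> y = 0}" S]
    by fastforce
qed

lemma face_of_eq_if_dim_le:
  fixes F G :: "'a::euclidean_space set"
  assumes "convex G" "F face_of G" "0 \<in> F" "dim G \<le> dim F"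
  shows "F = G"
proof (rule ccontr)
  assume "F \<noteq> G"
  then have "aff_dim F < aff_dim G" using face_of_aff_dim_lt assms(1,2) by blast
  moreover have "0 \<in> G" using assms(2,3) face_of_imp_subset by blast
  ultimately have "dim F < dim G" using assms(3) by (simp add: aff_dim_zero hull_inc)
  with assms(4) show False by simp
qed

lemma finite_face_dims: "finite (face_dims (C :: 'a::euclidean_space set))"
  by (rule finite_subset[of _ "{..DIM('a)}"]) (auto simp: face_dims_def dim_subset_UNIV)

lemma le_nth_if_less_nth_Suc_sorted_list_of_set:
  fixes S :: "'a::linorder set"
  assumes "finite S" "Suc i < length (sorted_list_of_set S)"
    and "k \<in> S" "k < sorted_list_of_set S ! Suc i"
  shows "k \<le> sorted_list_of_set S ! i"
proof -
  let ?L = "sorted_list_of_set S"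
  obtain m where m: "m < length ?L" "k = ?L ! m"
    using assms(1,3) by (metis in_set_conv_nth set_sorted_list_of_set)
  have "m \<le> i"
  proof (rule ccontr)
    assume "\<not> m \<le> i"
    then have "?L ! Suc i \<le> ?L ! m"
      using sorted_nth_mono[OF sorted_sorted_list_of_set, of "Suc i" m] m(1) by simp
    with assms(4) m(2) show False by simp
  qed
  then show ?thesis
    using sorted_nth_mono[OF sorted_sorted_list_of_set, of m i S] m assms(2) by simp
qed

lemma face_pairsD:
  assumes "(E, F) \<in> face_pairs C j"
  shows "E face_of C" "E \<noteq> {}" "F face_of C" "F \<noteq> {}" "F \<subseteq> E"
  using assms by (auto simp: face_pairs_def face_level_def)

lemma face_pairs_dims:
  fixes C :: "'a::euclidean_space set"
  assumes "1 \<le> j" "j \<le> face_d C" "(E, F) \<in> face_pairs C j"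
  shows "dim F < dim E"
    and "\<And>G. G face_of C \<Longrightarrow> G \<noteq> {} \<Longrightarrow> dim G < dim E \<Longrightarrow> dim G \<le> dim F"
proof -
  define i where "i = face_d C - j"
  have i: "Suc i < length (dims_list C)" "face_d C - (j - 1) = Suc i"
    using assms(1,2) unfolding i_def face_d_def by auto
  have "dim F = face_dim_n C (face_d C - j)" "dim E = face_dim_n C (face_d C - (j - 1))"
    using assms(3) unfolding face_pairs_def face_level_def by auto
  then have dims: "dim F = dims_list C ! i" "dim E = dims_list C ! Suc i"
    by (simp_all only: face_dim_n_def i(2) i_def[symmetric])
  show "dim F < dim E"
    using strict_sorted_list_of_set[of "face_dims C"] i(1)
    unfolding dims dims_list_def sorted_wrt_iff_nth_less by (metis lessI)
  show "dim G \<le> dim F" if "G face_of C" "G \<noteq> {}" "dim G < dim E" for G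
    using that finite_face_dims i(1) unfolding dims dims_list_def
    by (intro le_nth_if_less_nth_Suc_sorted_list_of_set) (auto simp: face_dims_def)
qed

lemma face_pairs_lower_dim:
  fixes C :: "'a::euclidean_space set"
  assumes "1 \<le> j" "j \<le> face_d C" "(E, F) \<in> face_pairs C j"
  shows "lower_dim C E = dim F"
  unfolding lower_dim_def
proof (rule Max_eqI)
  show "finite {dim G |G. G face_of C \<and> G \<noteq> {} \<and> dim G < dim E}"
    by (rule finite_subset[OF _ finite_face_dims]) (auto simp: face_dims_def)
  show "dim F \<in> {dim G |G. G face_of C \<and> G \<noteq> {} \<and> dim G < dim E}"
    using face_pairsD[OF assms(3)] face_pairs_dims(1)[OF assms] by blast
qed (use face_pairs_dims(2)[OF assms] in blast)

lemma face_pairs_regular_point: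
  fixes C :: "'a::euclidean_space set"
  assumes "locally_smooth C" "1 \<le> j" "j \<le> face_d C" "(E, F) \<in> face_pairs C j"
    and "x \<in> rel_interior F"
  shows "regular_point E x"
proof -
  note EF = face_pairsD[OF assms(4)]
  have low: "lower_dim C E = dim F" and less: "dim F < dim E"
    using face_pairs_lower_dim[OF assms(2-4)] face_pairs_dims(1)[OF assms(2-4)] by auto
  then have "modular_face C E"
    unfolding modular_face_def using EF by (intro conjI exI[of _ F]) auto
  then have "smooth_face C E" using assms(1) unfolding locally_smooth_def by blast
  then have "F face_of E \<and> F \<noteq> {} \<and> F \<noteq> E \<and> dim F = lower_dim C E
      \<longrightarrow> (\<forall>x\<in>rel_interior F. regular_point E x)"
    unfolding smooth_face_def by (rule spec)
  moreover have "F face_of E"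
    using face_of_subset[OF EF(3,5)] face_of_imp_subset[OF EF(1)] by blast
  moreover have "F \<noteq> E" using less by auto
  ultimately show ?thesis using EF(4) low assms(5) by auto
qed

lemma face_pairs_orth_comp_ray_gen:
  fixes C :: "'a::euclidean_space set"
  assumes "conic C" "locally_smooth C" "1 \<le> j" "j \<le> face_d C" "(E, F) \<in> face_pairs C j"
  obtains u where "u \<noteq> 0" "orth_comp F \<inter> dual_cone_span E = ray_gen u"
proof -
  note EF = face_pairsD[OF assms(5)]
  obtain x where x: "x \<in> rel_interior F"
    using EF(3,4) face_of_imp_convex rel_interior_eq_empty by blast
  have "F face_of E"
    using face_of_subset[OF EF(3,5)] face_of_imp_subset[OF EF(1)] by blast
  with face_of_conic[OF assms(1) EF(1)] x face_pairs_regular_point[OF assms(2-5) x] that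
  show ?thesis by (blast intro: orth_comp_Int_dual_cone_span_eq_ray_gen)
qed

lemma face_pairs_Int_kernel_eq:
  fixes C :: "'a::euclidean_space set"
  assumes "conic C" "1 \<le> j" "j \<le> face_d C" "(E, F) \<in> face_pairs C j"
    and "e \<in> orth_comp F \<inter> dual_cone_span E" "e \<noteq> 0"
  shows "E \<inter> {y. e \<bullet> y = 0} = F"
proof -
  note EF = face_pairsD[OF assms(4)]
  let ?G = "E \<inter> {y. e \<bullet> y = 0}"
  have e: "e \<in> span E" "\<forall>y\<in>E. 0 \<le> e \<bullet> y" "\<forall>y\<in>F. e \<bullet> y = 0"
    using assms(5) by (auto simp: dual_cone_span_def dual_cone_def orth_comp_def inner_commute)
  have "?G face_of E"
    using e(2) face_of_imp_convex[OF EF(1)] by (intro face_of_Int_supporting_hyperplane_ge) auto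
  then have G: "?G face_of C" using EF(1) by (rule face_of_trans)
  have FG: "F \<subseteq> ?G" using EF(5) e(3) by blast
  have "dim ?G < dim E" using e(1) assms(6) by (rule dim_Int_kernel_less)
  then have "dim ?G \<le> dim F"
    using face_pairs_dims(2)[OF assms(2-4) G] FG EF(4) by blast
  moreover have "F face_of ?G" using face_of_subset[OF EF(3) FG] G face_of_imp_subset by blast
  moreover have "0 \<in> F"
    using face_of_conic[OF assms(1) EF(3)] EF(4) conic_contains_0 by blast
  ultimately show ?thesis
    using face_of_imp_convex[OF G] by (intro face_of_eq_if_dim_le[symmetric])
qed

lemma face_pairs_norm_gen:
  fixes C :: "'a::euclidean_space set"
  assumes "conic C" "locally_smooth C" "1 \<le> j" "j \<le> face_d C" "(E, F) \<in> face_pairs C j"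
  shows "\<exists>!e. norm e = 1 \<and> orth_comp F \<inter> dual_cone_span E = ray_gen e"
    and "E \<inter> {y. norm_gen F E \<bullet> y = 0} = F"
proof -
  obtain u where u: "u \<noteq> 0" "orth_comp F \<inter> dual_cone_span E = ray_gen u"
    using face_pairs_orth_comp_ray_gen[OF assms] .
  then show "\<exists>!e. norm e = 1 \<and> orth_comp F \<inter> dual_cone_span E = ray_gen e"
    by (simp add: ex1_unit_ray_gen)
  note e = norm_gen_ray_gen[OF u]
  have "norm_gen F E \<in> orth_comp F \<inter> dual_cone_span E"
    unfolding e(2) by (rule mem_ray_gen_self)
  moreover have "norm_gen F E \<noteq> 0" using e(1) by auto
  ultimately show "E \<inter> {y. norm_gen F E \<bullet> y = 0} = F"
    by (rule face_pairs_Int_kernel_eq[OF assms(1,3-5)])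
qed

lemma inj_on_face_pairs_norm_gen:
  fixes C :: "'a::euclidean_space set"
  assumes "conic C" "locally_smooth C" "1 \<le> j" "j \<le> face_d C"
  shows "inj_on (\<lambda>(E, F). (E, norm_gen F E)) (face_pairs C j)"
proof (rule inj_onI)
  fix p q assume p: "p \<in> face_pairs C j" and q: "q \<in> face_pairs C j"
    and eq: "(\<lambda>(E, F). (E, norm_gen F E)) p = (\<lambda>(E, F). (E, norm_gen F E)) q"
  obtain E F E' F' where pq: "p = (E, F)" "q = (E', F')" by (cases p, cases q)
  have "E' = E" "norm_gen F' E' = norm_gen F E" using eq unfolding pq by auto
  then have "F' = F"
    using face_pairs_norm_gen(2)[OF assms p[unfolded pq(1)]]
      face_pairs_norm_gen(2)[OF assms q[unfolded pq(2)]] by metis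
  with \<open>E' = E\<close> show "p = q" unfolding pq by simp
qed

theorem mainTheorem11:
  fixes \<Omega> :: "'a::euclidean_space set" and j :: nat
  assumes "closed \<Omega>" and "convex \<Omega>" and "cone \<Omega>"
    and "pointed_cone \<Omega>" and "interior \<Omega> \<noteq> {}"
    and "locally_smooth (dual_cone \<Omega>)"
    and "1 \<le> j" and "j \<le> face_d (dual_cone \<Omega>)"
  shows "(\<forall>(E, F) \<in> face_pairs (dual_cone \<Omega>) j.
            (\<exists>!e. norm e = 1 \<and> orth_comp F \<inter> dual_cone_span E = ray_gen e) \<and>
            (orth_comp F \<inter> dual_cone_span E) face_of dual_cone_span E)
         \<and> inj_on (\<lambda>(E, F). (E, norm_gen F E)) (face_pairs (dual_cone \<Omega>) j)"
proof -
  note smooth_cone = conic_dual_cone assms(6-8)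
  have "(\<exists>!e. norm e = 1 \<and> orth_comp F \<inter> dual_cone_span E = ray_gen e) \<and>
      (orth_comp F \<inter> dual_cone_span E) face_of dual_cone_span E"
    if "(E, F) \<in> face_pairs (dual_cone \<Omega>) j" for E F
    using face_pairs_norm_gen(1)[OF smooth_cone that] face_pairsD[OF that] face_of_imp_convex
    by (blast intro: face_of_dual_cone_span_orth_comp)
  then show ?thesis
    using inj_on_face_pairs_norm_gen[OF smooth_cone] by (simp add: Ball_def split_paired_All)
qed

end
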